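(* Let $U:\mathbb{R}_1\to\mathbb{R}_1$ be as defined in the context, let $a\in\mathbb{N}_1$ and $l\in\mathbb{N}_1$ with $U^l(a)=a$. Then for every $x\in\mathbb{R}_1$ the following are equivalent: (i) the parity sequence $\mathcal{P}_U(x)=(\lfloor U^i(x)\rfloor \bmod 2)_{i\ge 0}$ is eventually periodic with period $s=(a\bmod 2,\,U(a)\bmod 2,\dots,U^{l-1}(a)\bmod 2)$, i.e. there is $j\in\mathbb{N}_0$ such that $(\lfloor U^{i}(x)\rfloor\bmod 2,\dots,\lfloor U^{i+l-1}(x)\rfloor\bmod 2)=s$ for all $i=j+ml$, $m\in\mathbb{N}_0$; (ii) $\mathcal{T}_U(x)$ tends to $\{U^t(a)\}$ from above, i.e. there is $j_0\in\mathbb{N}_0$ such that for every $j\in\{0,1,\dots,l-1\}$ the sequence $\big(U^{kl}(U^{j+j_0}(x))\big)_{k\ge 0}$ converges to $U^j(a)$ as $k\to\infty$ and all of its terms are $\ge U^j(a)$.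
   Context: $\mathbb{R}_1=\{x\in\mathbb{R}:x\ge1\}$, $\mathbb{N}_1=\{1,2,\dots\}$, $\mathbb{N}_0=\{0,1,2,\dots\}$, $\lfloor x\rfloor$ is the floor of $x$. $U:\mathbb{R}_1\to\mathbb{R}_1$ is given by $U(x)=x/2$ if $\lfloor x\rfloor$ is even and $U(x)=(3x+1)/2$ if $\lfloor x\rfloor$ is odd; $U^i$ denotes the $i$-th iterate ($U^0=\mathrm{id}$), and $\mathcal{T}_U(x)=(U^i(x))_{i\ge0}$ is the trajectory of $x$. *)

theory Defs
  imports Complex_Main
begin

text \<open>The map U on [1,oo); defined on all reals, only used on x >= 1.\<close>
definition U :: "real \<Rightarrow> real" where
  "U x = (if even \<lfloor>x\<rfloor> then x / 2 else (3 * x + 1) / 2)"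

end

theory Submission
  imports Defs
begin

text \<open>On each set of reals whose floors have a fixed parity, U is affine with slope 1/2 or 3/2.
So if the parity sequence of z agrees with that of the integer l-periodic point a, then
U^(kl+t)(z) - U^t(a) = \<lambda>^k \<mu>_t (z - a) with \<mu>_t > 0, where \<lambda> is the product of the slopes
along the cycle. Since U(y) \<ge> slope(y) y with equality only at even steps, and a cycle cannot
consist of even steps only, \<lambda> < 1. A point below an integer n whose floor has the parity of n
lies below n - 1; as the distance to the cycle shrinks like \<lambda>^k, this forces z \<ge> a, i.e.
convergence from above. Conversely, convergence from above to the integers U^t(a) eventually
fixes the floors along the orbit.\<close>

definition U_slope :: "real \<Rightarrow> real" where
  "U_slope r = (if even \<lfloor>r\<rfloor> then 1/2 else 3/2)"

definition U_offset :: "real \<Rightarrow> real" where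
  "U_offset r = (if even \<lfloor>r\<rfloor> then 0 else 1/2)"

lemma U_eq_slope_offset: "U r = U_slope r * r + U_offset r"
  unfolding U_def U_slope_def U_offset_def by auto

lemma U_slope_pos: "U_slope r > 0"
  unfolding U_slope_def by auto

lemma U_offset_nonneg: "U_offset r \<ge> 0"
  unfolding U_offset_def by auto

lemma U_same_parity:
  assumes "\<lfloor>z\<rfloor> mod 2 = \<lfloor>w\<rfloor> mod 2"
  shows "U z = U w + U_slope w * (z - w)"
proof -
  from assms have "even \<lfloor>z\<rfloor> \<longleftrightarrow> even \<lfloor>w\<rfloor>"
    by (metis even_iff_mod_2_eq_zero)
  then show ?thesis
    unfolding U_def U_slope_def by (auto simp: field_simps)
qed

lemma U_Ints:
  assumes "r \<in> \<int>"
  shows "U r \<in> \<int>"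
proof -
  from assms obtain n where r: "r = of_int n"
    by (auto elim: Ints_cases)
  show ?thesis
  proof (cases "even n")
    case True
    then obtain k where "n = 2 * k" by blast
    moreover have "\<lfloor>r\<rfloor> = n" using r by simp
    ultimately have "U r = of_int k"
      using True r unfolding U_def by simp
    then show ?thesis by simp
  next
    case False
    then obtain k where "n = 2 * k + 1" by (blast elim: oddE)
    moreover have "\<lfloor>r\<rfloor> = n" using r by simp
    ultimately have "U r = of_int (3 * k + 2)"
      using False r unfolding U_def by (simp add: field_simps)
    then show ?thesis by simp
  qed
qed

lemma funpow_U_Ints: "r \<in> \<int> \<Longrightarrow> (U ^^ i) r \<in> \<int>"
  by (induction i) (simp_all add: U_Ints)

lemma funpow_mult_period: "(f ^^ l) w = w \<Longrightarrow> (f ^^ (k * l)) w = w"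
  using funpow_mod_eq[where f = f and n = l and x = w and m = "k * l"] by simp

definition orbit_slope :: "real \<Rightarrow> nat \<Rightarrow> real" where
  "orbit_slope w i = (\<Prod>r<i. U_slope ((U ^^ r) w))"

lemma orbit_slope_0 [simp]: "orbit_slope w 0 = 1"
  by (simp add: orbit_slope_def)

lemma orbit_slope_Suc: "orbit_slope w (Suc i) = orbit_slope w i * U_slope ((U ^^ i) w)"
  by (simp add: orbit_slope_def)

lemma orbit_slope_pos: "orbit_slope w i > 0"
  unfolding orbit_slope_def by (intro prod_pos) (simp add: U_slope_pos)

lemma orbit_slope_add: "orbit_slope w (i + j) = orbit_slope w i * orbit_slope ((U ^^ i) w) j"
proof -
  have "(U ^^ (i + r)) w = (U ^^ r) ((U ^^ i) w)" for r
    by (metis add.commute comp_apply funpow_add)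
  then show ?thesis
    by (induction j) (simp_all add: orbit_slope_Suc)
qed

lemma orbit_slope_periodic:
  assumes "(U ^^ l) w = w"
  shows "orbit_slope w (k * l + i) = orbit_slope w l ^ k * orbit_slope w i"
proof -
  have "orbit_slope w (k * l) = orbit_slope w l ^ k"
  proof (induction k)
    case (Suc k)
    have "orbit_slope w (Suc k * l) = orbit_slope w (l + k * l)" by simp
    also have "\<dots> = orbit_slope w l * orbit_slope w (k * l)"
      by (simp only: orbit_slope_add assms)
    finally show ?case using Suc by simp
  qed simp
  then show ?thesis
    by (simp add: orbit_slope_add funpow_mult_period[OF assms])
qed

lemma funpow_U_same_parities:
  assumes "\<And>r. r < i \<Longrightarrow> \<lfloor>(U ^^ r) z\<rfloor> mod 2 = \<lfloor>(U ^^ r) w\<rfloor> mod 2"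
  shows "(U ^^ i) z = (U ^^ i) w + orbit_slope w i * (z - w)"
  using assms
proof (induction i)
  case (Suc i)
  then have IH: "(U ^^ i) z = (U ^^ i) w + orbit_slope w i * (z - w)"
    by simp
  have "(U ^^ Suc i) z = U ((U ^^ i) z)"
    by simp
  also have "\<dots> = (U ^^ Suc i) w + U_slope ((U ^^ i) w) * ((U ^^ i) z - (U ^^ i) w)"
    using U_same_parity[OF Suc.prems] by simp
  also have "\<dots> = (U ^^ Suc i) w + orbit_slope w (Suc i) * (z - w)"
    by (simp add: IH orbit_slope_Suc)
  finally show ?case .
qed simp

lemma funpow_U_ge_orbit_slope: "orbit_slope w i * w \<le> (U ^^ i) w"
proof (induction i)
  case (Suc i)
  have "orbit_slope w (Suc i) * w \<le> U_slope ((U ^^ i) w) * (U ^^ i) w"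
    using Suc U_slope_pos by (simp add: orbit_slope_Suc mult.commute mult.left_commute)
  also have "\<dots> \<le> (U ^^ Suc i) w"
    using U_offset_nonneg by (simp add: U_eq_slope_offset)
  finally show ?case .
qed simp

lemma orbit_slope_eq_half_power:
  assumes "(U ^^ i) w = orbit_slope w i * w"
  shows "orbit_slope w i = (1/2) ^ i"
  using assms
proof (induction i)
  case (Suc i)
  let ?c = "(U ^^ i) w"
  have lower: "U_slope ?c * (orbit_slope w i * w) \<le> U_slope ?c * ?c"
    using funpow_U_ge_orbit_slope U_slope_pos by (simp add: mult_left_mono less_imp_le)
  have "U_slope ?c * ?c + U_offset ?c = U_slope ?c * (orbit_slope w i * w)"
    using Suc.prems U_eq_slope_offset[of ?c] by (simp add: orbit_slope_Suc mult_ac)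
  with lower U_offset_nonneg have "U_offset ?c = 0" and "?c = orbit_slope w i * w"
    by (smt (verit) U_slope_pos mult_left_cancel)+
  then show ?case
    using Suc.IH by (simp add: orbit_slope_Suc U_slope_def U_offset_def split: if_splits)
qed simp

lemma periodic_orbit_slope_less_1:
  assumes "w \<ge> 0" and "l \<ge> 1" and "(U ^^ l) w = w"
  shows "orbit_slope w l < 1"
proof (rule ccontr)
  assume "\<not> orbit_slope w l < 1"
  then have "w \<le> orbit_slope w l * w"
    using assms(1) by (simp add: mult_le_cancel_right1)
  with funpow_U_ge_orbit_slope[of w l] assms(3) have "(U ^^ l) w = orbit_slope w l * w"
    by simp
  then have "orbit_slope w l = (1/2) ^ l"
    by (rule orbit_slope_eq_half_power)
  also have "\<dots> < 1"
    using assms(2) by (simp add: power_less_one_iff)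
  finally show False using \<open>\<not> orbit_slope w l < 1\<close> by simp
qed

lemma same_parity_below_Int:
  assumes "w \<in> \<int>" and "z < w" and "\<lfloor>z\<rfloor> mod 2 = \<lfloor>w\<rfloor> mod 2"
  shows "z < w - 1"
proof -
  from assms(1) obtain n where w: "w = of_int n"
    by (auto elim: Ints_cases)
  with assms(2) have "\<lfloor>z\<rfloor> < n" by (simp add: floor_less_iff)
  with assms(3) w have "\<lfloor>z\<rfloor> \<le> n - 2" by simp presburger
  then show ?thesis
    using floor_le_iff[of z "n - 2"] w by simp
qed

lemma same_parities_imp_ge_periodic_point:
  assumes "w \<in> \<int>" and "w \<ge> 0" and "l \<ge> 1" and "(U ^^ l) w = w"
    and parities: "\<And>i. \<lfloor>(U ^^ i) z\<rfloor> mod 2 = \<lfloor>(U ^^ i) w\<rfloor> mod 2"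
  shows "z \<ge> w"
proof (rule ccontr)
  assume "\<not> z \<ge> w"
  have expands: "orbit_slope w i * (w - z) > 1" for i
  proof -
    have "(U ^^ i) z = (U ^^ i) w - orbit_slope w i * (w - z)"
      using funpow_U_same_parities[OF parities] by (simp add: algebra_simps)
    moreover have "(U ^^ i) z < (U ^^ i) w"
      using calculation \<open>\<not> z \<ge> w\<close> orbit_slope_pos[of w i] by simp
    ultimately show ?thesis
      using same_parity_below_Int[OF funpow_U_Ints[OF assms(1)]] parities by fastforce
  qed
  have "(\<lambda>k. orbit_slope w l ^ k * (w - z)) \<longlonglongrightarrow> 0"
    using periodic_orbit_slope_less_1[OF assms(2-4)] orbit_slope_pos[of w l]
    by (intro tendsto_mult_left_zero LIMSEQ_power_zero) simp
  then obtain k where "orbit_slope w l ^ k * (w - z) < 1"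
    by (metis order_tendstoD(2) zero_less_one eventually_sequentially order_refl)
  with expands[of "k * l"] orbit_slope_periodic[OF assms(4), of k 0] show False
    by simp
qed

lemma same_parities_imp_tendsto_from_above:
  assumes "w \<in> \<int>" and "w \<ge> 0" and "l \<ge> 1" and "(U ^^ l) w = w"
    and parities: "\<And>i. \<lfloor>(U ^^ i) z\<rfloor> mod 2 = \<lfloor>(U ^^ i) w\<rfloor> mod 2"
  shows "(\<lambda>k. (U ^^ (k * l)) ((U ^^ t) z)) \<longlonglongrightarrow> (U ^^ t) w"
    and "(U ^^ (k * l)) ((U ^^ t) z) \<ge> (U ^^ t) w"
proof -
  have orbit: "(U ^^ (k * l)) ((U ^^ t) z)
      = (U ^^ t) w + orbit_slope w l ^ k * (orbit_slope w t * (z - w))" for k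
  proof -
    have "(U ^^ (k * l)) ((U ^^ t) z) = (U ^^ (k * l + t)) z"
      by (simp add: funpow_add)
    also have "\<dots> = (U ^^ (t + k * l)) w + orbit_slope w (k * l + t) * (z - w)"
      using funpow_U_same_parities[OF parities] by (simp add: add.commute)
    also have "(U ^^ (t + k * l)) w = (U ^^ t) w"
      by (simp add: funpow_add funpow_mult_period[OF assms(4)])
    finally show ?thesis
      by (simp add: orbit_slope_periodic[OF assms(4)])
  qed
  have "z \<ge> w"
    using same_parities_imp_ge_periodic_point[OF assms] .
  then show "(U ^^ (k * l)) ((U ^^ t) z) \<ge> (U ^^ t) w"
    unfolding orbit using orbit_slope_pos[of w l] orbit_slope_pos[of w t] by simp
  have "(\<lambda>k. (U ^^ t) w + orbit_slope w l ^ k * (orbit_slope w t * (z - w)))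
      \<longlonglongrightarrow> (U ^^ t) w + 0 * (orbit_slope w t * (z - w))"
    using periodic_orbit_slope_less_1[OF assms(2-4)] orbit_slope_pos[of w l]
    by (intro tendsto_intros LIMSEQ_power_zero) simp_all
  then show "(\<lambda>k. (U ^^ (k * l)) ((U ^^ t) z)) \<longlonglongrightarrow> (U ^^ t) w"
    unfolding orbit by simp
qed

lemma eventually_periodic_parities_imp_tendsto_from_above:
  assumes "w \<in> \<int>" and "w \<ge> 0" and "l \<ge> 1" and "(U ^^ l) w = w"
    and "\<forall>m. \<forall>t<l. \<lfloor>(U ^^ (j + m * l + t)) x\<rfloor> mod 2 = \<lfloor>(U ^^ t) w\<rfloor> mod 2"
  shows "\<forall>t<l. (\<lambda>k. (U ^^ (k * l)) ((U ^^ (t + j)) x)) \<longlonglongrightarrow> (U ^^ t) w \<and>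
           (\<forall>k. (U ^^ (k * l)) ((U ^^ (t + j)) x) \<ge> (U ^^ t) w)"
proof -
  have "\<lfloor>(U ^^ i) ((U ^^ j) x)\<rfloor> mod 2 = \<lfloor>(U ^^ i) w\<rfloor> mod 2" for i
  proof -
    have "i mod l < l"
      using assms(3) by simp
    then have "\<lfloor>(U ^^ (j + (i div l) * l + i mod l)) x\<rfloor> mod 2 = \<lfloor>(U ^^ (i mod l)) w\<rfloor> mod 2"
      using assms(5) by blast
    moreover have "j + (i div l) * l + i mod l = i + j"
      by simp
    moreover have "(U ^^ (i mod l)) w = (U ^^ i) w"
      using funpow_mod_eq[OF assms(4)] .
    ultimately show ?thesis
      by (simp add: funpow_add)
  qed
  from same_parities_imp_tendsto_from_above[OF assms(1-4) this]
  show ?thesis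
    by (simp add: funpow_add)
qed

lemma floor_eventually_eq_if_tendsto_from_above:
  fixes f :: "'a \<Rightarrow> 'b::{floor_ceiling, order_topology}"
  assumes "(f \<longlongrightarrow> of_int n) F" and "eventually (\<lambda>x. f x \<ge> of_int n) F"
  shows "eventually (\<lambda>x. \<lfloor>f x\<rfloor> = n) F"
proof -
  have "eventually (\<lambda>x. f x < of_int n + 1) F"
    using assms(1) by (rule order_tendstoD) simp
  with assms(2) show ?thesis
    by eventually_elim (simp add: floor_eq_iff)
qed

lemma tendsto_from_above_imp_eventually_periodic_parities:
  assumes "w \<in> \<int>"
    and "\<forall>t<l. (\<lambda>k. (U ^^ (k * l)) ((U ^^ (t + j0)) x)) \<longlonglongrightarrow> (U ^^ t) w \<and>
           (\<forall>k. (U ^^ (k * l)) ((U ^^ (t + j0)) x) \<ge> (U ^^ t) w)"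
  shows "\<exists>j. \<forall>m. \<forall>t<l. \<lfloor>(U ^^ (j + m * l + t)) x\<rfloor> mod 2 = \<lfloor>(U ^^ t) w\<rfloor> mod 2"
proof -
  have "\<forall>t\<in>{..<l}. eventually
      (\<lambda>k. \<lfloor>(U ^^ (k * l)) ((U ^^ (t + j0)) x)\<rfloor> = \<lfloor>(U ^^ t) w\<rfloor>) sequentially"
  proof
    fix t assume "t \<in> {..<l}"
    then have "(\<lambda>k. (U ^^ (k * l)) ((U ^^ (t + j0)) x)) \<longlonglongrightarrow> (U ^^ t) w"
      and "\<forall>k. (U ^^ (k * l)) ((U ^^ (t + j0)) x) \<ge> (U ^^ t) w"
      using assms(2) by auto
    moreover obtain n where n: "(U ^^ t) w = of_int n"
      using funpow_U_Ints[OF assms(1)] by (blast elim: Ints_cases)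
    ultimately have "eventually (\<lambda>k. \<lfloor>(U ^^ (k * l)) ((U ^^ (t + j0)) x)\<rfloor> = n) sequentially"
      unfolding n by (intro floor_eventually_eq_if_tendsto_from_above) (auto intro: always_eventually)
    with n show "eventually
        (\<lambda>k. \<lfloor>(U ^^ (k * l)) ((U ^^ (t + j0)) x)\<rfloor> = \<lfloor>(U ^^ t) w\<rfloor>) sequentially"
      by simp
  qed
  then have "eventually (\<lambda>k. \<forall>t\<in>{..<l}.
      \<lfloor>(U ^^ (k * l)) ((U ^^ (t + j0)) x)\<rfloor> = \<lfloor>(U ^^ t) w\<rfloor>) sequentially"
    by (rule eventually_ball_finite[OF finite_lessThan])
  then obtain K where K: "\<And>k t. k \<ge> K \<Longrightarrow> t < l \<Longrightarrow>
      \<lfloor>(U ^^ (k * l)) ((U ^^ (t + j0)) x)\<rfloor> = \<lfloor>(U ^^ t) w\<rfloor>"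
    unfolding eventually_sequentially by blast
  have "\<lfloor>(U ^^ (j0 + K * l + m * l + t)) x\<rfloor> = \<lfloor>(U ^^ t) w\<rfloor>" if "t < l" for m t
  proof -
    have "j0 + K * l + m * l + t = (K + m) * l + (t + j0)"
      by (simp add: algebra_simps)
    then show ?thesis
      using K[of "K + m" t] that by (simp only: funpow_add comp_apply)
  qed
  then show ?thesis
    by (intro exI[of _ "j0 + K * l"] allI impI) simp
qed

theorem proposition1:
  fixes a l :: nat and x :: real
  assumes "a \<ge> 1" and "l \<ge> 1" and "(U ^^ l) (real a) = real a"
    and "x \<ge> 1"
  shows "(\<exists>j::nat. \<forall>m::nat. \<forall>t<l.
            \<lfloor>(U ^^ (j + m * l + t)) x\<rfloor> mod 2 = \<lfloor>(U ^^ t) (real a)\<rfloor> mod 2)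
     \<longleftrightarrow>
         (\<exists>j0::nat. \<forall>j<l.
            (\<lambda>k. (U ^^ (k * l)) ((U ^^ (j + j0)) x)) \<longlonglongrightarrow> (U ^^ j) (real a) \<and>
            (\<forall>k. (U ^^ (k * l)) ((U ^^ (j + j0)) x) \<ge> (U ^^ j) (real a)))"
proof -
  have a: "real a \<in> \<int>" "real a \<ge> 0" by simp_all
  show ?thesis
    using eventually_periodic_parities_imp_tendsto_from_above[OF a assms(2,3)]
      tendsto_from_above_imp_eventually_periodic_parities[OF a(1)]
    by blast
qed

end
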